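(* In the isotropic setting below, let $F,F_p\in\mathrm{GL}^+(3)$, $C_p=F_p^TF_p$, $U_p=\sqrt{C_p}$, $R_p=F_pU_p^{-1}\in\mathrm{SO}(3)$. Then $$\mathring\Sigma=R_p^T\Sigma_eR_p=U_p^{-1}\widetilde\Sigma\,U_p,\qquad \widetilde\Sigma=U_p\mathring\Sigma\,U_p^{-1},\qquad \|\mathrm{dev}_3\mathring\Sigma\|=\|\mathrm{dev}_3\Sigma_e\|,$$ and $$\mathrm{tr}\big[(\mathrm{dev}_3\widetilde\Sigma)^2\big]=\|\mathrm{dev}_3(U_p^{-1}\widetilde\Sigma U_p)\|^2=\|\mathrm{dev}_3\mathring\Sigma\|^2\ge0.$$ In particular $\sqrt{\mathrm{tr}[(\mathrm{dev}_3\widetilde\Sigma)^2]}=\|\mathrm{dev}_3\Sigma_e\|=\|\mathrm{dev}_3\tau_e\|$ is well defined.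
   Context: $W:\mathrm{GL}^+(3)\to\mathbb{R}$ objective and isotropic ($W(QFR)=W(F)$, $Q,R\in\mathrm{SO}(3)$), written $W(F_e)=\Psi(I_1(C_e),I_2(C_e),I_3(C_e))$ with $\Psi\in C^1$; $\widetilde W(X)=\Psi(\mathrm{tr}X,\mathrm{tr}(\mathrm{Cof}X),\det X)$. $F_e=FF_p^{-1}$, $C=F^TF$, $C_e=F_e^TF_e$. $\langle X,Y\rangle=\mathrm{tr}(XY^T)$, $\|\cdot\|$ Frobenius norm, $D$ gradient, $\mathrm{dev}_3X=X-\frac13\mathrm{tr}(X)\mathbb{1}$, $\mathrm{sym}X=\frac12(X+X^T)$. $\Sigma_e=F_e^TDW(F_e)$, $\tau_e=DW(F_e)F_e^T$ (symmetric for isotropic $W$). $\widetilde\Sigma:=2\,C\,D\widetilde W(CC_p^{-1})\,C_p^{-1}$. Grandi–Stefanelli stress: $\mathring\Sigma:=2\,U_p^{-1}\,\mathrm{sym}\big[C\,D\widetilde W(CC_p^{-1})\big]\,U_p^{-1}\in\mathrm{Sym}(3)$. *)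

theory Defs
  imports "HOL-Analysis.Analysis"
begin

type_synonym mat3 = "real^3^3"

text \<open>Cofactor matrix: (Cof X)_ij = det of X with row i and column j replaced by
  the unit vectors e_j resp. e_i (i.e. the signed (i,j)-minor).\<close>
definition Cof :: "mat3 \<Rightarrow> mat3" where
  "Cof X = (\<chi> i j. det (\<chi> k l. if k = i \<and> l = j then 1
                                  else if k = i \<or> l = j then 0 else X $ k $ l))"

definition I1 :: "mat3 \<Rightarrow> real" where "I1 X = trace X"
definition I2 :: "mat3 \<Rightarrow> real" where "I2 X = trace (Cof X)"
definition I3 :: "mat3 \<Rightarrow> real" where "I3 X = det X"

text \<open>Gradient w.r.t. the Frobenius inner product (which is the inner product
  of real^3^3): the matrix G with DW(X)[H] = <G, H>.\<close>
definition grad :: "(mat3 \<Rightarrow> real) \<Rightarrow> mat3 \<Rightarrow> mat3" where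
  "grad f X = (THE G. (f has_derivative (\<lambda>H. G \<bullet> H)) (at X))"

definition sym :: "mat3 \<Rightarrow> mat3" where
  "sym X = (1/2) *\<^sub>R (X + transpose X)"

definition dev3 :: "mat3 \<Rightarrow> mat3" where
  "dev3 X = X - (trace X / 3) *\<^sub>R mat 1"

definition SO3 :: "mat3 set" where
  "SO3 = {Q. orthogonal_matrix Q \<and> det Q = 1}"

definition C1_on :: "(real \<times> real \<times> real) set \<Rightarrow> (real \<times> real \<times> real \<Rightarrow> real) \<Rightarrow> bool" where
  "C1_on S f \<longleftrightarrow> (\<exists>f'. (\<forall>x\<in>S. (f has_derivative blinfun_apply (f' x)) (at x))
                       \<and> continuous_on S f')"

text \<open>Natural domain of \<Psi>: invariants of positive definite tensors.\<close>
definition posoct :: "(real \<times> real \<times> real) set" where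
  "posoct = {(a,b,c). a > 0 \<and> b > 0 \<and> c > 0}"

definition Wtilde :: "(real \<times> real \<times> real \<Rightarrow> real) \<Rightarrow> mat3 \<Rightarrow> real" where
  "Wtilde \<Psi> X = \<Psi> (trace X, trace (Cof X), det X)"

end

theory Submission
  imports Defs
begin

(* Isotropy enters only through the representation
   W(Fe) = Psi(inv3 (Fe^T Fe)) with inv3 X = (tr X, tr Cof X, det X).  By the chain rule
   both energy gradients are expressed through one matrix, the invariant gradient
   G = Psi_1 1 + Psi_2 (tr Ce 1 - Ce^T) + Psi_3 Cof Ce at Ce = Fe^T Fe:
   DW(Fe) = 2 Fe G, and, since C Cp^-1 = Fp^T Ce Fp^-T is similar to Ce and the
   invariants are similarity invariant, D Wtilde(C Cp^-1) = Fp^-1 G Fp.  As G is a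
   polynomial in Ce, the matrix Ce G is symmetric; hence C D Wtilde(C Cp^-1) =
   Fp^T (Ce G) Fp is symmetric and the symmetrisation in the Grandi-Stefanelli stress
   is inactive.  With Sigma_e = 2 Ce G the identities between Sigma_r, Sigma_e and
   Sigma_t reduce to matrix algebra using Up^2 = Cp and Rp^T Rp = 1.  The deviatoric
   norms agree because tr((dev3 (XY))^2) = tr((dev3 (YX))^2) for all X, Y, while for
   symmetric A this quantity is |dev3 A|^2.
   Sections: inverse-matrix algebra; the invariants; their derivatives and the gradient
   of Wtilde; the gradient of W; the pull-back to the reference configuration;
   deviatoric parts; the theorem. *)

section \<open>Inverses of square matrices with nonzero determinant\<close>

lemma matrix_inv_right_det:
  fixes A :: "real^'n^'n" assumes "det A \<noteq> 0" shows "A ** matrix_inv A = mat 1"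
proof -
  have "invertible A" using assms invertible_det_nz by blast
  then show ?thesis unfolding invertible_def matrix_inv_def by (rule someI2_ex) auto
qed

lemma matrix_inv_left_det:
  fixes A :: "real^'n^'n" assumes "det A \<noteq> 0" shows "matrix_inv A ** A = mat 1"
proof -
  have "invertible A" using assms invertible_det_nz by blast
  then show ?thesis unfolding invertible_def matrix_inv_def by (rule someI2_ex) auto
qed

lemma matrix_inv_eqI:
  fixes A B :: "real^'n^'n" assumes "B ** A = mat 1" shows "matrix_inv A = B"
proof -
  have "det B * det A = 1" using assms det_mul[of B A] by simp
  then have "det A \<noteq> 0" by auto
  have "matrix_inv A = (B ** A) ** matrix_inv A" using assms by simp
  also have "\<dots> = B"
    by (simp add: matrix_mul_assoc[symmetric] matrix_inv_right_det[OF \<open>det A \<noteq> 0\<close>])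
  finally show ?thesis .
qed

lemma det_matrix_inv:
  fixes A :: "real^'n^'n" assumes "det A \<noteq> 0" shows "det (matrix_inv A) = 1 / det A"
  using det_mul[of A "matrix_inv A"] matrix_inv_right_det[OF assms] assms
  by (simp add: field_simps)

lemma matrix_inv_mult:
  fixes A B :: "real^'n^'n" assumes "det A \<noteq> 0" "det B \<noteq> 0"
  shows "matrix_inv (A ** B) = matrix_inv B ** matrix_inv A"
  by (rule matrix_inv_eqI)
     (metis assms matrix_inv_left_det matrix_mul_assoc matrix_mul_lid)

lemma matrix_inv_transpose:
  fixes A :: "real^'n^'n" assumes "det A \<noteq> 0"
  shows "matrix_inv (transpose A) = transpose (matrix_inv A)"
  by (rule matrix_inv_eqI)
     (metis assms matrix_inv_right_det matrix_transpose_mul transpose_mat)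

lemma matrix_inv_inv:
  fixes A :: "real^'n^'n" assumes "det A \<noteq> 0" shows "matrix_inv (matrix_inv A) = A"
  by (rule matrix_inv_eqI) (rule matrix_inv_right_det[OF assms])

lemma matrix_inv_cancel_left:
  fixes A B :: "real^'n^'n" assumes "det A \<noteq> 0"
  shows "A ** (matrix_inv A ** B) = B" "matrix_inv A ** (A ** B) = B"
  by (simp_all add: matrix_mul_assoc matrix_inv_right_det[OF assms] matrix_inv_left_det[OF assms])

lemma matrix_inv_cancel_right:
  fixes A B :: "real^'n^'n" assumes "det A \<noteq> 0"
  shows "B ** matrix_inv A ** A = B" "B ** A ** matrix_inv A = B"
  by (simp_all add: matrix_mul_assoc[symmetric] matrix_inv_right_det[OF assms]
      matrix_inv_left_det[OF assms])

lemma posdef_det_nonzero: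
  fixes U :: "real^'n^'n" assumes "\<And>x. x \<noteq> 0 \<Longrightarrow> x \<bullet> (U *v x) > 0"
  shows "det U \<noteq> 0"
proof -
  have "\<forall>x. U *v x = 0 \<longrightarrow> x = 0" using assms by (metis inner_zero_right less_irrefl)
  then obtain B where "B ** U = mat 1" using matrix_left_invertible_ker by blast
  then have "det B * det U = 1" by (metis det_I det_mul)
  then show ?thesis by auto
qed

lemma transpose_add: fixes A B :: "real^'n^'m" shows "transpose (A + B) = transpose A + transpose B"
  by (simp add: transpose_def vec_eq_iff)

lemma transpose_diff: fixes A B :: "real^'n^'m" shows "transpose (A - B) = transpose A - transpose B"
  by (simp add: transpose_def vec_eq_iff)

lemma matrix_add_rdistrib: fixes A B C :: "real^'n^'n" shows "(A + B) ** C = A ** C + B ** C"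
  by (simp add: matrix_matrix_mult_def vec_eq_iff sum.distrib algebra_simps)

lemma matrix_diff_ldistrib: fixes A B C :: "real^'n^'n" shows "A ** (B - C) = A ** B - A ** C"
  by (simp add: matrix_matrix_mult_def vec_eq_iff sum_subtractf algebra_simps)

lemma matrix_diff_rdistrib: fixes A B C :: "real^'n^'n" shows "(A - B) ** C = A ** C - B ** C"
  by (simp add: matrix_matrix_mult_def vec_eq_iff sum_subtractf algebra_simps)

lemmas matrix_scaleR_assoc = scalar_matrix_assoc[symmetric] matrix_scalar_ac

lemma trace_transpose: fixes A :: "real^'n^'n" shows "trace (transpose A) = trace A"
  by (simp add: trace_def transpose_def)

lemma inner_eq_trace: fixes A B :: "real^'n^'n" shows "A \<bullet> B = trace (A ** transpose B)"
  by (simp add: inner_vec_def trace_def matrix_matrix_mult_def transpose_def)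

lemma norm_sq_eq_trace: fixes A :: "real^'n^'n" shows "(norm A)^2 = trace (A ** transpose A)"
  by (simp add: power2_norm_eq_inner inner_eq_trace)

lemma transpose_congruence:
  fixes P A :: "real^'n^'n" shows "transpose (transpose P ** A ** P) = transpose P ** transpose A ** P"
  by (simp add: matrix_transpose_mul matrix_mul_assoc)

lemma trace_similar:
  fixes P A :: "real^'n^'n" assumes "det P \<noteq> 0" shows "trace (P ** A ** matrix_inv P) = trace A"
  by (metis assms matrix_inv_left_det matrix_mul_assoc matrix_mul_rid trace_mul_sym)

lemma square_similar:
  fixes P A :: "real^'n^'n" assumes "det P \<noteq> 0"
  shows "(P ** A ** matrix_inv P) ** (P ** A ** matrix_inv P) = P ** (A ** A) ** matrix_inv P"
  by (simp add: matrix_mul_assoc[symmetric] matrix_inv_cancel_left(2)[OF assms])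

lemma det_similar:
  fixes P A :: "real^'n^'n" assumes "det P \<noteq> 0" shows "det (P ** A ** matrix_inv P) = det A"
  using assms by (simp add: det_mul det_matrix_inv)

lemma sym_id: assumes "transpose M = M" shows "sym M = M"
  using assms by (simp add: sym_def vec_eq_iff transpose_def)

section \<open>The principal invariants of a 3x3 matrix\<close>

lemma Cof_components: fixes X :: mat3 shows
  "Cof X $ 1 $ 1 = X$2$2*X$3$3 - X$2$3*X$3$2"
  "Cof X $ 1 $ 2 = X$2$3*X$3$1 - X$2$1*X$3$3"
  "Cof X $ 1 $ 3 = X$2$1*X$3$2 - X$2$2*X$3$1"
  "Cof X $ 2 $ 1 = X$1$3*X$3$2 - X$1$2*X$3$3"
  "Cof X $ 2 $ 2 = X$1$1*X$3$3 - X$1$3*X$3$1"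
  "Cof X $ 2 $ 3 = X$1$2*X$3$1 - X$1$1*X$3$2"
  "Cof X $ 3 $ 1 = X$1$2*X$2$3 - X$1$3*X$2$2"
  "Cof X $ 3 $ 2 = X$1$3*X$2$1 - X$1$1*X$2$3"
  "Cof X $ 3 $ 3 = X$1$1*X$2$2 - X$1$2*X$2$1"
  by (simp_all add: Cof_def det_3)

lemmas mat3_entrywise = vec_eq_iff forall_3 matrix_matrix_mult_def sum_3 mat_def
  transpose_def Cof_components det_3 inner_vec_def trace_def

lemma adjugate_right: fixes X :: mat3 shows "X ** transpose (Cof X) = det X *\<^sub>R mat 1"
  by (simp add: mat3_entrywise algebra_simps)

lemma adjugate_left: fixes X :: mat3 shows "transpose (Cof X) ** X = det X *\<^sub>R mat 1"
  by (simp add: mat3_entrywise algebra_simps)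

lemma Cof_transpose: fixes X :: mat3 shows "Cof (transpose X) = transpose (Cof X)"
  by (simp add: mat3_entrywise algebra_simps)

lemma trace_Cof: fixes X :: mat3 shows "trace (Cof X) = ((trace X)^2 - trace (X ** X)) / 2"
  by (simp add: mat3_entrywise algebra_simps power2_eq_square)

lemma Cof_eq_det_inv: fixes X :: mat3 assumes "det X \<noteq> 0"
  shows "Cof X = det X *\<^sub>R transpose (matrix_inv X)"
proof -
  have "matrix_inv X = (1 / det X) *\<^sub>R transpose (Cof X)"
    by (rule matrix_inv_eqI) (use adjugate_left[of X] assms in \<open>simp add: matrix_scaleR_assoc\<close>)
  then show ?thesis using assms by (simp add: transpose_scalar)
qed

definition inv3 :: "mat3 \<Rightarrow> real \<times> real \<times> real" where
  "inv3 X = (trace X, trace (Cof X), det X)"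

lemma Wtilde_eq: "Wtilde \<Psi> = \<Psi> \<circ> inv3"
  by (rule ext) (simp add: Wtilde_def inv3_def)

lemma inv3_similar: fixes P A :: mat3 assumes "det P \<noteq> 0"
  shows "inv3 (P ** A ** matrix_inv P) = inv3 A"
  by (simp add: inv3_def trace_Cof trace_similar square_similar det_similar assms)

lemma Cof_similar: fixes P Y :: mat3 assumes P: "det P \<noteq> 0" and Y: "det Y \<noteq> 0"
  shows "Cof (P ** Y ** matrix_inv P) = transpose (matrix_inv P) ** Cof Y ** transpose P"
proof -
  have "det (P ** Y ** matrix_inv P) = det Y" by (rule det_similar[OF P])
  moreover have "matrix_inv (P ** Y ** matrix_inv P) = P ** matrix_inv Y ** matrix_inv P"
    using P Y by (simp add: matrix_inv_mult det_mul det_matrix_inv matrix_inv_inv matrix_mul_assoc)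
  ultimately show ?thesis
    using Cof_eq_det_inv[of "P ** Y ** matrix_inv P"] Cof_eq_det_inv[OF Y] Y
    by (simp add: matrix_transpose_mul matrix_mul_assoc matrix_scaleR_assoc)
qed

lemma transpose_zero: "transpose (0::real^'n^'m) = 0"
  by (simp add: transpose_def vec_eq_iff)

text \<open>The trace of a Gram matrix is the squared norm, hence positive unless A = 0.\<close>
lemma trace_gram_pos: fixes A :: "real^'n^'n" assumes "A \<noteq> 0"
  shows "trace (transpose A ** A) > 0"
  using norm_sq_eq_trace[of "transpose A"] assms
  by (metis transpose_transpose transpose_zero zero_less_norm_iff zero_less_power)

text \<open>The invariants of a Gram matrix of a nonsingular matrix are positive, so they
  lie in the domain on which Psi is differentiable.\<close>
lemma inv3_gram_pos: fixes Fe :: mat3 assumes "det Fe \<noteq> 0"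
  shows "inv3 (transpose Fe ** Fe) \<in> posoct"
proof -
  have "Fe \<noteq> 0" using assms by (metis det_0 mat_0)
  have "Cof Fe \<noteq> 0"
  proof
    assume "Cof Fe = 0"
    then have "det Fe *\<^sub>R (mat 1 :: mat3) = 0" using adjugate_right[of Fe] by (simp add: transpose_zero)
    moreover have "(mat 1 :: mat3) \<noteq> 0" by (metis det_0 det_I mat_0 zero_neq_one)
    ultimately show False using assms by simp
  qed
  have "Cof (transpose Fe ** Fe) = transpose (Cof Fe) ** Cof Fe"
    using Cof_eq_det_inv[of "transpose Fe ** Fe"] Cof_eq_det_inv[OF assms] assms
    by (simp add: det_mul matrix_inv_mult matrix_inv_transpose matrix_transpose_mul
        matrix_scaleR_assoc power2_eq_square transpose_scalar)
  then have "trace (Cof (transpose Fe ** Fe)) > 0" using trace_gram_pos[OF \<open>Cof Fe \<noteq> 0\<close>] by simp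
  moreover have "trace (transpose Fe ** Fe) > 0" using trace_gram_pos[OF \<open>Fe \<noteq> 0\<close>] .
  moreover have "det (transpose Fe ** Fe) > 0"
    using assms by (auto simp add: det_mul zero_less_mult_iff linorder_neq_iff)
  ultimately show ?thesis by (simp add: posoct_def inv3_def)
qed
section \<open>Derivatives of the invariants and the gradient of Wtilde\<close>

lemma entry_has_derivative: "((\<lambda>X::real^'n^'m. X$i$j) has_derivative (\<lambda>H. H$i$j)) F"
  by (intro bounded_linear.has_derivative[OF bounded_linear_compose[OF
        bounded_linear_vec_nth bounded_linear_vec_nth]] has_derivative_ident)

lemma det_has_derivative: "(det has_derivative (\<lambda>H. Cof X \<bullet> H)) (at X)"
proof -
  have polynomial: "det = (\<lambda>A::mat3. A$1$1 * A$2$2 * A$3$3 + A$1$2 * A$2$3 * A$3$1 + A$1$3 * A$2$1 * A$3$2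
      - A$1$1 * A$2$3 * A$3$2 - A$1$2 * A$2$1 * A$3$3 - A$1$3 * A$2$2 * A$3$1)"
    by (rule ext) (rule det_3)
  show ?thesis unfolding polynomial
    by (rule entry_has_derivative derivative_eq_intros refl)+
       (rule ext, simp add: mat3_entrywise algebra_simps)
qed

lemma trace_Cof_has_derivative:
  "((\<lambda>X. trace (Cof X)) has_derivative (\<lambda>H. (trace X *\<^sub>R mat 1 - transpose X) \<bullet> H)) (at X)"
proof -
  have polynomial: "(\<lambda>X::mat3. trace (Cof X)) = (\<lambda>X. X$1$1*X$2$2 - X$1$2*X$2$1 + X$1$1*X$3$3
      - X$1$3*X$3$1 + X$2$2*X$3$3 - X$2$3*X$3$2)"
    by (rule ext) (simp add: mat3_entrywise algebra_simps)
  show ?thesis unfolding polynomial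
    by (rule entry_has_derivative derivative_eq_intros refl)+
       (rule ext, simp add: mat3_entrywise algebra_simps)
qed

lemma trace_has_derivative: "((\<lambda>X::mat3. trace X) has_derivative (\<lambda>H. mat 1 \<bullet> H)) (at X)"
proof -
  have polynomial: "(\<lambda>X::mat3. trace X) = (\<lambda>X. X$1$1 + X$2$2 + X$3$3)"
    by (rule ext) (simp add: mat3_entrywise)
  show ?thesis unfolding polynomial
    by (rule entry_has_derivative derivative_eq_intros refl)+
       (rule ext, simp add: mat3_entrywise algebra_simps)
qed

lemma inv3_has_derivative:
  "(inv3 has_derivative
     (\<lambda>H. (mat 1 \<bullet> H, (trace X *\<^sub>R mat 1 - transpose X) \<bullet> H, Cof X \<bullet> H))) (at X)"
  unfolding inv3_def[abs_def]
  by (intro has_derivative_Pair trace_has_derivative trace_Cof_has_derivative det_has_derivative)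

text \<open>The gradient of Wtilde Psi at X when L is the derivative of Psi at inv3 X:
  the chain rule applied to the three invariant gradients.\<close>
definition inv3_grad :: "(real \<times> real \<times> real \<Rightarrow> real) \<Rightarrow> mat3 \<Rightarrow> mat3" where
  "inv3_grad L X = L (1,0,0) *\<^sub>R mat 1 + L (0,1,0) *\<^sub>R (trace X *\<^sub>R mat 1 - transpose X)
     + L (0,0,1) *\<^sub>R Cof X"

lemma linear_triple:
  fixes L :: "real \<times> real \<times> real \<Rightarrow> real" assumes "linear L"
  shows "L (a,b,c) = a * L (1,0,0) + b * L (0,1,0) + c * L (0,0,1)"
proof -
  have "L (a,b,c) = L (a *\<^sub>R (1,0,0) + b *\<^sub>R (0,1,0) + c *\<^sub>R (0,0,1))"
    by simp
  also have "\<dots> = a * L (1,0,0) + b * L (0,1,0) + c * L (0,0,1)"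
    by (simp only: linear_add[OF assms] linear_scale[OF assms] real_scaleR_def)
  finally show ?thesis .
qed

lemma Wtilde_has_derivative:
  assumes "(\<Psi> has_derivative L) (at (inv3 X))"
  shows "(Wtilde \<Psi> has_derivative (\<lambda>H. inv3_grad L X \<bullet> H)) (at X)"
proof -
  have "linear L" using assms has_derivative_linear by blast
  have "(\<Psi> \<circ> inv3 has_derivative
      L \<circ> (\<lambda>H. (mat 1 \<bullet> H, (trace X *\<^sub>R mat 1 - transpose X) \<bullet> H, Cof X \<bullet> H))) (at X)"
    by (rule diff_chain_at[OF inv3_has_derivative assms])
  moreover have "L \<circ> (\<lambda>H. (mat 1 \<bullet> H, (trace X *\<^sub>R mat 1 - transpose X) \<bullet> H, Cof X \<bullet> H))
      = (\<lambda>H. inv3_grad L X \<bullet> H)"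
  proof
    fix H
    show "(L \<circ> (\<lambda>H. (mat 1 \<bullet> H, (trace X *\<^sub>R mat 1 - transpose X) \<bullet> H, Cof X \<bullet> H))) H
      = inv3_grad L X \<bullet> H"
      using linear_triple[OF \<open>linear L\<close>, of "mat 1 \<bullet> H"
          "(trace X *\<^sub>R mat 1 - transpose X) \<bullet> H" "Cof X \<bullet> H"]
      by (simp add: inv3_grad_def inner_add_left mult.commute)
  qed
  ultimately show ?thesis by (simp add: Wtilde_eq)
qed

lemma grad_eqI:
  assumes "(f has_derivative (\<lambda>H. G \<bullet> H)) (at X)" shows "grad f X = G"
  unfolding grad_def
proof (rule the_equality)
  fix G' assume "(f has_derivative (\<lambda>H. G' \<bullet> H)) (at X)"
  from has_derivative_unique[OF this assms] have "\<And>H. G' \<bullet> H = G \<bullet> H" by metis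
  from this[of "G' - G"] have "(G' - G) \<bullet> (G' - G) = 0" by (simp add: inner_diff_left)
  then show "G' = G" by simp
qed (rule assms)

text \<open>For symmetric Y the invariant gradient is symmetric and commutes with Y:
  it is a linear combination of 1, Y and Cof Y, the latter a multiple of Y^-1.\<close>
lemma inv3_grad_symmetric:
  assumes "transpose Y = Y" shows "transpose (inv3_grad L Y) = inv3_grad L Y"
  using assms Cof_transpose[of Y]
  by (simp add: inv3_grad_def transpose_add transpose_diff transpose_scalar)

lemma inv3_grad_commutes:
  assumes "transpose Y = Y" shows "transpose (Y ** inv3_grad L Y) = Y ** inv3_grad L Y"
proof -
  have "Y ** Cof Y = det Y *\<^sub>R mat 1"
    using adjugate_right[of Y] Cof_transpose[of Y] assms by simp
  then have "Y ** inv3_grad L Y = L (1,0,0) *\<^sub>R Y + L (0,1,0) *\<^sub>R (trace Y *\<^sub>R Y - Y ** Y)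
      + L (0,0,1) *\<^sub>R (det Y *\<^sub>R mat 1)"
    using assms
    by (simp add: inv3_grad_def matrix_add_ldistrib matrix_diff_ldistrib matrix_scaleR_assoc
        scaleR_diff_right)
  then show ?thesis using assms
    by (simp add: transpose_add transpose_diff transpose_scalar matrix_transpose_mul)
qed

lemma inv3_grad_similar:
  fixes P Y :: mat3 assumes P: "det P \<noteq> 0" and Y: "det Y \<noteq> 0"
  shows "inv3_grad L (P ** Y ** matrix_inv P) = transpose (matrix_inv P) ** inv3_grad L Y ** transpose P"
proof -
  have "transpose (P ** Y ** matrix_inv P) = transpose (matrix_inv P) ** transpose Y ** transpose P"
    by (simp add: matrix_transpose_mul matrix_mul_assoc)
  moreover have "transpose (matrix_inv P) ** mat 1 ** transpose P = mat 1"
    by (metis P matrix_inv_right_det matrix_mul_rid matrix_transpose_mul transpose_mat)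
  ultimately show ?thesis
    using trace_similar[OF P, of Y] Cof_similar[OF P Y]
    by (simp add: inv3_grad_def matrix_add_ldistrib matrix_add_rdistrib matrix_diff_ldistrib
        matrix_diff_rdistrib matrix_scaleR_assoc scaleR_diff_right)
qed

section \<open>The gradient of W\<close>

text \<open>Matrix multiplication and transposition are (bounded) bilinear resp. linear,
  which gives the derivative of F^T F by the product rule.\<close>
lemma matrix_mult_bounded_bilinear: "bounded_bilinear (\<lambda>(A::real^'n^'n) (B::real^'n^'n). A ** B)"
  unfolding bilinear_conv_bounded_bilinear[symmetric] bilinear_def
  by (auto simp: linear_iff matrix_add_ldistrib matrix_add_rdistrib matrix_scaleR_assoc)

lemma transpose_bounded_linear: "bounded_linear (transpose :: real^'n^'n \<Rightarrow> real^'n^'n)"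
  by (rule bounded_linearI') (simp_all add: transpose_add transpose_scalar)

lemma gram_has_derivative:
  "((\<lambda>F::real^'n^'n. transpose F ** F) has_derivative
     (\<lambda>H. transpose F ** H + transpose H ** F)) (at F)"
  by (rule bounded_bilinear.FDERIV[OF matrix_mult_bounded_bilinear
        bounded_linear.has_derivative[OF transpose_bounded_linear has_derivative_ident]
        has_derivative_ident])

lemma inner_transpose_mult:
  fixes G F H :: "real^'n^'n" shows "G \<bullet> (transpose F ** H) = (F ** G) \<bullet> H"
proof -
  have "G \<bullet> (transpose F ** H) = trace ((G ** transpose H) ** F)"
    by (simp add: inner_eq_trace matrix_transpose_mul matrix_mul_assoc)
  also have "\<dots> = (F ** G) \<bullet> H"
    by (simp add: inner_eq_trace trace_mul_sym[of _ F] matrix_mul_assoc)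
  finally show ?thesis .
qed

lemma inner_transpose_transpose:
  fixes A B :: "real^'n^'n" shows "transpose A \<bullet> transpose B = A \<bullet> B"
  by (metis inner_eq_trace matrix_transpose_mul trace_mul_sym trace_transpose)

text \<open>Needed to see that det > 0 is an open condition.\<close>
lemma det_continuous: "continuous_on UNIV (det :: mat3 \<Rightarrow> real)"
  using det_has_derivative has_derivative_continuous continuous_at_imp_continuous_on by blast

text \<open>Off the domain det > 0 the energy W is
  unconstrained, so the representation is transferred on the open set det > 0.\<close>
lemma grad_W:
  assumes D: "\<forall>x\<in>posoct. (\<Psi> has_derivative D x) (at x)"
    and W: "\<And>Fe. det Fe > 0 \<Longrightarrow> W Fe = Wtilde \<Psi> (transpose Fe ** Fe)"
    and pos: "det Fe > 0"
  defines "Ce \<equiv> transpose Fe ** Fe"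
  shows "grad W Fe = 2 *\<^sub>R (Fe ** inv3_grad (D (inv3 Ce)) Ce)"
proof -
  define G where "G = inv3_grad (D (inv3 Ce)) Ce"
  have "inv3 Ce \<in> posoct" unfolding Ce_def by (rule inv3_gram_pos) (use pos in simp)
  then have Wt: "(Wtilde \<Psi> has_derivative (\<lambda>H. G \<bullet> H)) (at Ce)"
    unfolding G_def using D by (intro Wtilde_has_derivative) auto
  have "transpose G = G" unfolding G_def
    by (rule inv3_grad_symmetric) (simp add: Ce_def matrix_transpose_mul)
  then have "G \<bullet> (transpose H ** Fe) = G \<bullet> (transpose Fe ** H)" for H
    using inner_transpose_transpose[of G "transpose H ** Fe"] by (simp add: matrix_transpose_mul)
  then have "G \<bullet> (transpose Fe ** H + transpose H ** Fe) = (2 *\<^sub>R (Fe ** G)) \<bullet> H" for H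
    by (simp add: inner_add_right inner_transpose_mult)
  then have "((\<lambda>F. Wtilde \<Psi> (transpose F ** F)) has_derivative (\<lambda>H. (2 *\<^sub>R (Fe ** G)) \<bullet> H)) (at Fe)"
    using has_derivative_compose[OF gram_has_derivative Wt[unfolded Ce_def]] by simp
  then have "(W has_derivative (\<lambda>H. (2 *\<^sub>R (Fe ** G)) \<bullet> H)) (at Fe)"
    by (rule has_derivative_transform_within_open[where s="{F. 0 < det F}"])
       (auto intro: open_Collect_less continuous_on_const det_continuous simp: pos W)
  then show ?thesis unfolding G_def by (rule grad_eqI)
qed

section \<open>Pulling back to the reference configuration\<close>

lemma cauchy_green_pullback:
  fixes F Fp :: mat3 assumes Fp: "det Fp \<noteq> 0"
  defines "Ce \<equiv> transpose (F ** matrix_inv Fp) ** (F ** matrix_inv Fp)"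
  shows "transpose F ** F = transpose Fp ** Ce ** Fp"
    and "transpose F ** F ** matrix_inv (transpose Fp ** Fp)
         = transpose Fp ** Ce ** matrix_inv (transpose Fp)"
proof -
  have "det (transpose Fp) \<noteq> 0" using Fp by simp
  show C: "transpose F ** F = transpose Fp ** Ce ** Fp"
    unfolding Ce_def using matrix_inv_cancel_left[OF \<open>det (transpose Fp) \<noteq> 0\<close>]
    by (simp add: matrix_transpose_mul matrix_mul_assoc[symmetric] matrix_inv_left_det[OF Fp]
        flip: matrix_inv_transpose[OF Fp])
  have "det (transpose Fp) \<noteq> 0" using Fp by simp
  then show "transpose F ** F ** matrix_inv (transpose Fp ** Fp)
         = transpose Fp ** Ce ** matrix_inv (transpose Fp)"
    unfolding C using Fp
    by (simp add: matrix_inv_mult matrix_mul_assoc matrix_inv_cancel_right)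
qed

text \<open>Since Wtilde depends on X only through its invariants, its gradient at a
  matrix similar to Ce = Fe^T Fe is the correspondingly transformed invariant gradient.\<close>
lemma grad_Wtilde_similar:
  fixes P Fe :: mat3
  assumes D: "\<forall>x\<in>posoct. (\<Psi> has_derivative D x) (at x)"
    and P: "det P \<noteq> 0" and Fe: "det Fe \<noteq> 0"
  defines "Ce \<equiv> transpose Fe ** Fe"
  shows "grad (Wtilde \<Psi>) (P ** Ce ** matrix_inv P)
         = transpose (matrix_inv P) ** inv3_grad (D (inv3 Ce)) Ce ** transpose P"
proof -
  have inv: "inv3 (P ** Ce ** matrix_inv P) = inv3 Ce" by (rule inv3_similar[OF P])
  have "inv3 Ce \<in> posoct" unfolding Ce_def by (rule inv3_gram_pos[OF Fe])
  then have "(Wtilde \<Psi> has_derivative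
      (\<lambda>H. inv3_grad (D (inv3 Ce)) (P ** Ce ** matrix_inv P) \<bullet> H)) (at (P ** Ce ** matrix_inv P))"
    using D by (intro Wtilde_has_derivative) (simp add: inv)
  moreover have "det Ce \<noteq> 0" using Fe by (simp add: Ce_def det_mul)
  ultimately show ?thesis by (simp add: grad_eqI inv3_grad_similar[OF P])
qed

lemma isotropic_stress_representation:
  fixes F Fp :: mat3
  assumes D: "\<forall>x\<in>posoct. (\<Psi> has_derivative D x) (at x)"
    and W: "\<And>Fe. det Fe > 0 \<Longrightarrow> W Fe = Wtilde \<Psi> (transpose Fe ** Fe)"
    and F: "det F > 0" and Fp: "det Fp > 0"
  defines "Fe \<equiv> F ** matrix_inv Fp"
  defines "Ce \<equiv> transpose Fe ** Fe"
  defines "G \<equiv> inv3_grad (D (inv3 Ce)) Ce"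
  shows "grad W Fe = 2 *\<^sub>R (Fe ** G)"
    and "transpose F ** F ** grad (Wtilde \<Psi>) (transpose F ** F ** matrix_inv (transpose Fp ** Fp))
         = transpose Fp ** (Ce ** G) ** Fp"
    and "transpose G = G"
    and "transpose (Ce ** G) = Ce ** G"
proof -
  have dFp: "det Fp \<noteq> 0" and dFpT: "det (transpose Fp) \<noteq> 0" using Fp by simp_all
  have "det Fe > 0" using F Fp by (simp add: Fe_def det_mul det_matrix_inv)
  note gw = grad_W[OF D W this]
  then show "grad W Fe = 2 *\<^sub>R (Fe ** G)"
    unfolding G_def Ce_def .
  have Ce_sym: "transpose Ce = Ce" by (simp add: Ce_def matrix_transpose_mul)
  then show "transpose G = G" "transpose (Ce ** G) = Ce ** G"
    unfolding G_def by (rule inv3_grad_symmetric, rule inv3_grad_commutes)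
  have C: "transpose F ** F = transpose Fp ** Ce ** Fp"
    and C_Cp: "transpose F ** F ** matrix_inv (transpose Fp ** Fp)
               = transpose Fp ** Ce ** matrix_inv (transpose Fp)"
    using cauchy_green_pullback[OF dFp, of F] unfolding Ce_def Fe_def by simp_all
  have "grad (Wtilde \<Psi>) (transpose Fp ** Ce ** matrix_inv (transpose Fp)) = matrix_inv Fp ** G ** Fp"
    using grad_Wtilde_similar[OF D dFpT, of Fe] \<open>det Fe > 0\<close> dFp
    by (simp add: Ce_def G_def matrix_inv_transpose)
  then show "transpose F ** F ** grad (Wtilde \<Psi>) (transpose F ** F ** matrix_inv (transpose Fp ** Fp))
         = transpose Fp ** (Ce ** G) ** Fp"
    unfolding C_Cp unfolding C by (simp add: matrix_mul_assoc matrix_inv_cancel_right[OF dFp])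
qed

lemma intermediate_stress_relations:
  fixes Fp Up S :: mat3
  assumes Fp: "det Fp \<noteq> 0" and Up_sym: "transpose Up = Up" and Up: "det Up \<noteq> 0"
    and Up_sq: "Up ** Up = transpose Fp ** Fp" and S: "transpose S = S"
  defines "Rp \<equiv> Fp ** matrix_inv Up"
    and "St \<equiv> 2 *\<^sub>R (transpose Fp ** S ** Fp ** matrix_inv (transpose Fp ** Fp))"
    and "Sr \<equiv> 2 *\<^sub>R (matrix_inv Up ** sym (transpose Fp ** S ** Fp) ** matrix_inv Up)"
  shows "transpose Rp ** Rp = mat 1"
    and "Sr = transpose Rp ** (2 *\<^sub>R S) ** Rp"
    and "Sr = matrix_inv Up ** St ** Up"
    and "St = Up ** Sr ** matrix_inv Up"
proof -
  have Ui_sym: "transpose (matrix_inv Up) = matrix_inv Up"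
    using matrix_inv_transpose[OF Up] Up_sym by simp
  have Rp_T: "transpose Rp = matrix_inv Up ** transpose Fp"
    by (simp add: Rp_def matrix_transpose_mul Ui_sym)
  have "transpose Rp ** Rp = matrix_inv Up ** (Up ** Up) ** matrix_inv Up"
    unfolding Rp_T by (simp add: Rp_def Up_sq matrix_mul_assoc)
  then show "transpose Rp ** Rp = mat 1"
    by (simp add: matrix_mul_assoc matrix_inv_cancel_right[OF Up] matrix_inv_left_det[OF Up]
        matrix_inv_right_det[OF Up])
  have sym_K: "sym (transpose Fp ** S ** Fp) = transpose Fp ** S ** Fp"
    by (rule sym_id) (simp add: transpose_congruence S)
  show "Sr = transpose Rp ** (2 *\<^sub>R S) ** Rp"
    unfolding Sr_def Rp_T sym_K by (simp add: Rp_def matrix_scaleR_assoc matrix_mul_assoc)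
  have "matrix_inv (transpose Fp ** Fp) = matrix_inv Up ** matrix_inv Up"
    unfolding Up_sq[symmetric] by (rule matrix_inv_mult[OF Up Up])
  then show Sr_St: "Sr = matrix_inv Up ** St ** Up"
    by (simp add: Sr_def St_def sym_K matrix_scaleR_assoc matrix_mul_assoc
        matrix_inv_cancel_right[OF Up])
  then show "St = Up ** Sr ** matrix_inv Up"
    by (simp add: matrix_mul_assoc matrix_inv_cancel_right[OF Up] matrix_inv_right_det[OF Up])
qed

section \<open>Deviatoric parts\<close>

lemma trace_dev3_square:
  fixes A :: mat3 shows "trace (dev3 A ** dev3 A) = trace (A ** A) - (trace A)^2 / 3"
  by (simp add: mat3_entrywise dev3_def algebra_simps power2_eq_square)

text \<open>tr((dev3 A)^2) only depends on tr A and tr(A^2), which are invariant under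
  cyclic permutation of a product; no symmetry is needed.\<close>
lemma trace_dev3_square_commute:
  fixes X Y :: mat3
  shows "trace (dev3 (X ** Y) ** dev3 (X ** Y)) = trace (dev3 (Y ** X) ** dev3 (Y ** X))"
proof -
  have "trace (X ** Y ** (X ** Y)) = trace (Y ** X ** (Y ** X))"
    by (metis matrix_mul_assoc trace_mul_sym)
  then show ?thesis by (simp add: trace_dev3_square trace_mul_sym[of X Y])
qed

lemma norm_dev3_sq:
  fixes A :: mat3 assumes "transpose A = A"
  shows "(norm (dev3 A))^2 = trace (dev3 A ** dev3 A)"
proof -
  have "transpose (dev3 A) = dev3 A"
    using assms by (simp add: dev3_def transpose_diff transpose_scalar trace_transpose)
  then show ?thesis using norm_sq_eq_trace[of "dev3 A"] by simp
qed

lemma norm_dev3_commute: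
  fixes X Y :: mat3
  assumes "transpose (X ** Y) = X ** Y" and "transpose (Y ** X) = Y ** X"
  shows "norm (dev3 (X ** Y)) = norm (dev3 (Y ** X))"
  using norm_dev3_sq[OF assms(1)] norm_dev3_sq[OF assms(2)] trace_dev3_square_commute[of X Y]
  by (metis norm_ge_zero power2_eq_imp_eq)

lemma deviatoric_norms_transfer:
  fixes Rp Up Se Sr St :: mat3
  assumes Rp: "transpose Rp ** Rp = mat 1" and Se: "transpose Se = Se"
    and Sr: "Sr = transpose Rp ** Se ** Rp"
    and Up: "det Up \<noteq> 0" and St: "St = Up ** Sr ** matrix_inv Up"
  shows "norm (dev3 Sr) = norm (dev3 Se)"
    and "trace (dev3 St ** dev3 St) = (norm (dev3 Sr))^2"
proof -
  have "Se ** Rp ** transpose Rp = Se"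
    using Rp matrix_left_right_inverse by (metis matrix_mul_assoc matrix_mul_rid)
  moreover have Sr_sym: "transpose Sr = Sr" unfolding Sr by (simp add: transpose_congruence Se)
  ultimately show "norm (dev3 Sr) = norm (dev3 Se)"
    using norm_dev3_commute[of "transpose Rp" "Se ** Rp"] Se unfolding Sr
    by (simp add: matrix_mul_assoc)
  have "trace (dev3 St ** dev3 St) = trace (dev3 (matrix_inv Up ** (Up ** Sr)) ** dev3 (matrix_inv Up ** (Up ** Sr)))"
    unfolding St by (rule trace_dev3_square_commute)
  then show "trace (dev3 St ** dev3 St) = (norm (dev3 Sr))^2"
    by (simp add: matrix_inv_cancel_left[OF Up] norm_dev3_sq[OF Sr_sym])
qed

theorem mainTheorem8:
  fixes W :: "mat3 \<Rightarrow> real" and \<Psi> :: "real \<times> real \<times> real \<Rightarrow> real"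
    and F Fp Up :: mat3
  assumes Psi_C1: "C1_on posoct \<Psi>"
    and W_Psi: "\<And>Fe. det Fe > 0 \<Longrightarrow>
          W Fe = \<Psi> (I1 (transpose Fe ** Fe), I2 (transpose Fe ** Fe), I3 (transpose Fe ** Fe))"
    and W_obj_iso: "\<And>X Q R. det X > 0 \<Longrightarrow> Q \<in> SO3 \<Longrightarrow> R \<in> SO3 \<Longrightarrow> W (Q ** X ** R) = W X"
    and F_pos: "det F > 0" and Fp_pos: "det Fp > 0"
    and Up_sym: "transpose Up = Up"
    and Up_posdef: "\<And>x::real^3. x \<noteq> 0 \<Longrightarrow> x \<bullet> (Up *v x) > 0"
    and Up_sq: "Up ** Up = transpose Fp ** Fp"
  shows
   "let C = transpose F ** F; Cp = transpose Fp ** Fp; Fe = F ** matrix_inv Fp;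
        Rp = Fp ** matrix_inv Up;
        Sigma_e = transpose Fe ** grad W Fe;
        tau_e = grad W Fe ** transpose Fe;
        Sigma_t = 2 *\<^sub>R (C ** grad (Wtilde \<Psi>) (C ** matrix_inv Cp) ** matrix_inv Cp);
        Sigma_r = 2 *\<^sub>R (matrix_inv Up ** sym (C ** grad (Wtilde \<Psi>) (C ** matrix_inv Cp))
                          ** matrix_inv Up)
    in Sigma_r = transpose Rp ** Sigma_e ** Rp
     \<and> Sigma_r = matrix_inv Up ** Sigma_t ** Up
     \<and> Sigma_t = Up ** Sigma_r ** matrix_inv Up
     \<and> norm (dev3 Sigma_r) = norm (dev3 Sigma_e)
     \<and> trace (dev3 Sigma_t ** dev3 Sigma_t) = (norm (dev3 (matrix_inv Up ** Sigma_t ** Up)))\<^sup>2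
     \<and> (norm (dev3 (matrix_inv Up ** Sigma_t ** Up)))\<^sup>2 = (norm (dev3 Sigma_r))\<^sup>2
     \<and> (norm (dev3 Sigma_r))\<^sup>2 \<ge> 0
     \<and> sqrt (trace (dev3 Sigma_t ** dev3 Sigma_t)) = norm (dev3 Sigma_e)
     \<and> norm (dev3 Sigma_e) = norm (dev3 tau_e)"
proof -
  obtain D' where D: "\<forall>x\<in>posoct. (\<Psi> has_derivative blinfun_apply (D' x)) (at x)"
    using Psi_C1 unfolding C1_on_def by blast
  have W: "\<And>Fe. det Fe > 0 \<Longrightarrow> W Fe = Wtilde \<Psi> (transpose Fe ** Fe)"
    using W_Psi by (simp add: Wtilde_def I1_def I2_def I3_def)
  have dFp: "det Fp \<noteq> 0" and dUp: "det Up \<noteq> 0"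
    using Fp_pos posdef_det_nonzero[OF Up_posdef] by auto
  define Fe where "Fe = F ** matrix_inv Fp"
  define Ce where "Ce = transpose Fe ** Fe"
  define G where "G = inv3_grad (blinfun_apply (D' (inv3 Ce))) Ce"
  have representation: "grad W Fe = 2 *\<^sub>R (Fe ** G)"
    "transpose F ** F ** grad (Wtilde \<Psi>) (transpose F ** F ** matrix_inv (transpose Fp ** Fp))
     = transpose Fp ** (Ce ** G) ** Fp"
    "transpose G = G" "transpose (Ce ** G) = Ce ** G"
    using isotropic_stress_representation[OF D W F_pos Fp_pos]
    unfolding G_def Ce_def Fe_def by simp_all
  define Rp where "Rp = Fp ** matrix_inv Up"
  define Se where "Se = transpose Fe ** grad W Fe"
  define St where "St = 2 *\<^sub>R (transpose F ** F ** grad (Wtilde \<Psi>)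
      (transpose F ** F ** matrix_inv (transpose Fp ** Fp)) ** matrix_inv (transpose Fp ** Fp))"
  define Sr where "Sr = 2 *\<^sub>R (matrix_inv Up ** sym (transpose F ** F ** grad (Wtilde \<Psi>)
      (transpose F ** F ** matrix_inv (transpose Fp ** Fp))) ** matrix_inv Up)"
  have Se_eq: "Se = 2 *\<^sub>R (Ce ** G)"
    unfolding Se_def representation(1) Ce_def by (simp add: matrix_scaleR_assoc matrix_mul_assoc)
  have relations: "transpose Rp ** Rp = mat 1" "Sr = transpose Rp ** Se ** Rp"
    "Sr = matrix_inv Up ** St ** Up" "St = Up ** Sr ** matrix_inv Up"
    using intermediate_stress_relations[OF dFp Up_sym dUp Up_sq representation(4)]
    unfolding St_def Sr_def Rp_def Se_eq representation(2) by blast+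
  \<comment> \<open>Deviatoric norms: Sigma_e and tau_e are the symmetric products Fe^T DW, DW Fe^T.\<close>
  have "transpose Se = Se" "transpose (grad W Fe ** transpose Fe) = grad W Fe ** transpose Fe"
    using representation(3,4) unfolding Se_eq representation(1)
    by (simp_all add: transpose_scalar matrix_transpose_mul matrix_mul_assoc matrix_scaleR_assoc)
  note norms = deviatoric_norms_transfer[OF relations(1) this(1) relations(2) dUp relations(4)]
    norm_dev3_commute[of "transpose Fe" "grad W Fe", folded Se_def, OF this]
  have "sqrt (trace (dev3 St ** dev3 St)) = norm (dev3 Se)" using norms(1,2) by simp
  then show ?thesis unfolding Let_def Fe_def[symmetric] Rp_def[symmetric] Se_def[symmetric]
      St_def[symmetric] Sr_def[symmetric] relations(3)[symmetric]
    by (intro conjI relations(2,4) norms refl zero_le_power2)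
qed

end
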